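(* Let $f:\mathbb{R}^n\to\mathbb{R}$ be bounded below and continuously differentiable with $\nabla f$ Lipschitz with constant $L_{\nabla f}$. Let $x\in\mathbb{R}^n$, $\Delta>0$, points $y_1,\ldots,y_p$ with $\|y_i-x\|\le\beta\Delta$ for some $\beta>0$ and all $i$, and let $m$ be the minimum Frobenius norm quadratic interpolation model described in the context, with $\hat F$ invertible. Then its Hessian satisfies $\|H\|\le\kappa_H:=\frac{L_{\nabla f}}{2}p\beta^4\|\hat F^{-1}\|_\infty$.
   Context: Here $n+2\le p\le(n+1)(n+2)/2-1$. Let $\hat s_i=(y_i-x)/\Delta$, $\hat M\in\mathbb{R}^{p\times(n+1)}$ with $i$-th row $[1,\hat s_i^T]$, $\hat P\in\mathbb{R}^{p\times p}$ with $\hat P_{ij}=\tfrac12(\hat s_i^T\hat s_j)^2$, and $\hat F=\begin{bmatrix}\hat P&\hat M\\ \hat M^T&0\end{bmatrix}\in\mathbb{R}^{(p+n+1)\times(p+n+1)}$. The model is $m(y)=c+g^T(y-x)+\tfrac12(y-x)^TH(y-x)$ where $(\hat\lambda_1,\ldots,\hat\lambda_p,c,\hat g)$ solves $\hat F[\hat\lambda;c;\hat g]=[f(y_1);\ldots;f(y_p);0;0_n]$, $g=\hat g/\Delta$, and $H=\sum_{i=1}^p\lambda_i(y_i-x)(y_i-x)^T$ with $\lambda_i=\hat\lambda_i/\Delta^4$; equivalently $(c,g,H)$ minimizes $\tfrac14\|H\|_F^2$ over symmetric $H$ subject to $m(y_i)=f(y_i)$ for all $i$. $\|A\|_\infty$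 is the maximum absolute row sum; $\|H\|$ is the operator 2-norm. *)

theory Defs
  imports "HOL-Analysis.Analysis"
begin

text \<open>Index set of the (p+n+1)x(p+n+1) matrix F-hat: rows/columns Inl i (i<p) for the
  lambda-block, Inr None for c, Inr (Some k) (k::'n) for the components of g-hat.\<close>

type_synonym 'n fidx = "nat + 'n option"

definition fidx_set :: "nat \<Rightarrow> 'n fidx set" where
  "fidx_set p = Inl ` {..<p} \<union> Inr ` UNIV"

definition shat :: "real^'n \<Rightarrow> real \<Rightarrow> (nat \<Rightarrow> real^'n) \<Rightarrow> nat \<Rightarrow> real^'n" where
  "shat x \<Delta> y i = (1 / \<Delta>) *\<^sub>R (y i - x)"

definition Fhat :: "real^'n \<Rightarrow> real \<Rightarrow> (nat \<Rightarrow> real^'n) \<Rightarrow> 'n fidx \<Rightarrow> 'n fidx \<Rightarrow> real" where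
  "Fhat x \<Delta> y a b =
     (case a of
        Inl i \<Rightarrow> (case b of
                    Inl j \<Rightarrow> (1/2) * (shat x \<Delta> y i \<bullet> shat x \<Delta> y j)^2
                  | Inr None \<Rightarrow> 1
                  | Inr (Some k) \<Rightarrow> shat x \<Delta> y i $ k)
      | Inr None \<Rightarrow> (case b of Inl j \<Rightarrow> 1 | Inr _ \<Rightarrow> 0)
      | Inr (Some k) \<Rightarrow> (case b of Inl j \<Rightarrow> shat x \<Delta> y j $ k | Inr _ \<Rightarrow> 0))"

definition is_inverse_on :: "'a set \<Rightarrow> ('a \<Rightarrow> 'a \<Rightarrow> real) \<Rightarrow> ('a \<Rightarrow> 'a \<Rightarrow> real) \<Rightarrow> bool" where
  "is_inverse_on I A B \<longleftrightarrow>
     (\<forall>a\<in>I. \<forall>b\<in>I. (\<Sum>c\<in>I. A a c * B c b) = (if a = b then 1 else 0)) \<and>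
     (\<forall>a\<in>I. \<forall>b\<in>I. (\<Sum>c\<in>I. B a c * A c b) = (if a = b then 1 else 0))"

definition invertible_on :: "'a set \<Rightarrow> ('a \<Rightarrow> 'a \<Rightarrow> real) \<Rightarrow> bool" where
  "invertible_on I A \<longleftrightarrow> (\<exists>B. is_inverse_on I A B)"

definition inv_on :: "'a set \<Rightarrow> ('a \<Rightarrow> 'a \<Rightarrow> real) \<Rightarrow> 'a \<Rightarrow> 'a \<Rightarrow> real" where
  "inv_on I A = (SOME B. is_inverse_on I A B)"

definition infnorm_on :: "'a set \<Rightarrow> ('a \<Rightarrow> 'a \<Rightarrow> real) \<Rightarrow> real" where
  "infnorm_on I A = Max ((\<lambda>a. \<Sum>b\<in>I. \<bar>A a b\<bar>) ` I)"

text \<open>Solution of Fhat [lambda-hat; c; g-hat] = [f(y_1); ...; f(y_p); 0; 0].\<close>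
definition mfn_sol :: "(real^'n \<Rightarrow> real) \<Rightarrow> real^'n \<Rightarrow> real \<Rightarrow> nat \<Rightarrow> (nat \<Rightarrow> real^'n) \<Rightarrow> 'n fidx \<Rightarrow> real" where
  "mfn_sol f x \<Delta> p y a =
     (\<Sum>b\<in>fidx_set p. inv_on (fidx_set p) (Fhat x \<Delta> y) a b *
        (case b of Inl i \<Rightarrow> f (y i) | Inr _ \<Rightarrow> 0))"

definition mfn_c :: "(real^'n \<Rightarrow> real) \<Rightarrow> real^'n \<Rightarrow> real \<Rightarrow> nat \<Rightarrow> (nat \<Rightarrow> real^'n) \<Rightarrow> real" where
  "mfn_c f x \<Delta> p y = mfn_sol f x \<Delta> p y (Inr None)"

definition mfn_g :: "(real^'n \<Rightarrow> real) \<Rightarrow> real^'n \<Rightarrow> real \<Rightarrow> nat \<Rightarrow> (nat \<Rightarrow> real^'n) \<Rightarrow> real^'n" where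
  "mfn_g f x \<Delta> p y = (\<chi> k. mfn_sol f x \<Delta> p y (Inr (Some k)) / \<Delta>)"

definition mfn_H :: "(real^'n \<Rightarrow> real) \<Rightarrow> real^'n \<Rightarrow> real \<Rightarrow> nat \<Rightarrow> (nat \<Rightarrow> real^'n) \<Rightarrow> real^'n^'n" where
  "mfn_H f x \<Delta> p y =
     (\<Sum>i<p. (mfn_sol f x \<Delta> p y (Inl i) / \<Delta>^4) *\<^sub>R
               (\<chi> a b. (y i - x) $ a * (y i - x) $ b))"

definition mfn_model :: "(real^'n \<Rightarrow> real) \<Rightarrow> real^'n \<Rightarrow> real \<Rightarrow> nat \<Rightarrow> (nat \<Rightarrow> real^'n) \<Rightarrow> real^'n \<Rightarrow> real" where
  "mfn_model f x \<Delta> p y z = mfn_c f x \<Delta> p y + mfn_g f x \<Delta> p y \<bullet> (z - x)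
      + (1/2) * ((z - x) \<bullet> (mfn_H f x \<Delta> p y *v (z - x)))"

end

(* Since H = sum_i lambda_i (y_i - x)(y_i - x)^T, its norm is at most
   sum_i |lambda_i| ||y_i - x||^2 <= p (beta Delta)^2 max_i |lambda_i|.
   The interpolation conditions of an affine function are solved with lambda = 0, so
   lambda-hat is F-hat^-1 applied to the residuals f(y_i) - f(x) - grad f(x)^T (y_i - x)
   (padded with zeros), each at most L/2 (beta Delta)^2 in absolute value by the Taylor
   estimate for a Lipschitz gradient; hence |lambda_i| <= ||F-hat^-1||_inf L/2 beta^2 / Delta^2. *)

theory Submission
  imports Defs
begin

lemma lipschitz_constant_nonneg:
  fixes g :: "'a::euclidean_space \<Rightarrow> 'b::real_normed_vector"
  assumes lip: "\<And>u v. norm (g u - g v) \<le> L * norm (u - v)"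
  shows "0 \<le> L"
proof -
  obtain b :: 'a where "b \<in> Basis"
    using nonempty_Basis by blast
  then have "norm (0 - b) = 1"
    by simp
  with lip[of 0 b] show ?thesis
    by (metis mult.right_neutral norm_ge_zero order_trans)
qed

lemma lipschitz_gradient_taylor_upper:
  fixes f :: "'a::real_inner \<Rightarrow> real"
  assumes deriv: "\<And>z. (f has_derivative (\<lambda>h. grad z \<bullet> h)) (at z)"
    and lip: "\<And>u v. norm (grad u - grad v) \<le> L * norm (u - v)"
  shows "f y - f x - grad x \<bullet> (y - x) \<le> L / 2 * (norm (y - x))\<^sup>2"
proof -
  define h where "h = y - x"
  define \<phi> where "\<phi> t = f (x + t *\<^sub>R h) - t * (grad x \<bullet> h) - L / 2 * t\<^sup>2 * (norm h)\<^sup>2" for t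
  define \<phi>' where "\<phi>' t = (grad (x + t *\<^sub>R h) - grad x) \<bullet> h - L * t * (norm h)\<^sup>2" for t
  have \<phi>_deriv: "DERIV \<phi> t :> \<phi>' t" for t
  proof -
    have "((\<lambda>t. x + t *\<^sub>R h) has_derivative (\<lambda>u. u *\<^sub>R h)) (at t)"
      by (auto intro!: derivative_eq_intros)
    from has_derivative_compose[OF this deriv]
    have f_line: "((\<lambda>t. f (x + t *\<^sub>R h)) has_real_derivative grad (x + t *\<^sub>R h) \<bullet> h) (at t)"
      unfolding has_field_derivative_def o_def
      by (rule has_derivative_eq_rhs) (simp add: fun_eq_iff mult.commute)
    show ?thesis
      unfolding \<phi>_def \<phi>'_def
      by (rule derivative_eq_intros f_line refl)+ (simp add: inner_diff_left)
  qed
  have \<phi>'_nonpos: "\<phi>' t \<le> 0" if "0 \<le> t" for t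
  proof -
    have "(grad (x + t *\<^sub>R h) - grad x) \<bullet> h \<le> norm (grad (x + t *\<^sub>R h) - grad x) * norm h"
      by (rule Cauchy_Schwarz_ineq2[THEN abs_le_D1])
    also have "\<dots> \<le> L * norm (t *\<^sub>R h) * norm h"
      using lip[of "x + t *\<^sub>R h" x] by (simp add: mult_right_mono)
    also have "\<dots> = L * t * (norm h)\<^sup>2"
      using that by (simp add: power2_eq_square)
    finally show ?thesis
      unfolding \<phi>'_def by simp
  qed
  have "\<phi> 1 \<le> \<phi> 0"
    using \<phi>_deriv \<phi>'_nonpos by (intro DERIV_nonpos_imp_nonincreasing[of 0 1]) auto
  then show ?thesis
    unfolding \<phi>_def h_def by simp
qed

lemma lipschitz_gradient_taylor_abs:
  fixes f :: "'a::real_inner \<Rightarrow> real"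
  assumes deriv: "\<And>z. (f has_derivative (\<lambda>h. grad z \<bullet> h)) (at z)"
    and lip: "\<And>u v. norm (grad u - grad v) \<le> L * norm (u - v)"
  shows "\<bar>f y - f x - grad x \<bullet> (y - x)\<bar> \<le> L / 2 * (norm (y - x))\<^sup>2"
proof -
  have "((\<lambda>z. - f z) has_derivative (\<lambda>h. - grad z \<bullet> h)) (at z)" for z
    using has_derivative_minus[OF deriv[of z]] by simp
  moreover have "norm (- grad u - - grad v) \<le> L * norm (u - v)" for u v
    using lip[of u v] by (simp add: norm_minus_commute)
  ultimately have "- f y + f x + grad x \<bullet> (y - x) \<le> L / 2 * (norm (y - x))\<^sup>2"
    using lipschitz_gradient_taylor_upper[of "\<lambda>z. - f z" "\<lambda>z. - grad z" L y x] by simp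
  with lipschitz_gradient_taylor_upper[OF deriv lip, of y x] show ?thesis
    by linarith
qed

lemma inverse_on_apply_add_image:
  assumes "is_inverse_on I F B" "finite I" "a \<in> I"
  shows "(\<Sum>b\<in>I. B a b * (r b + (\<Sum>c\<in>I. F b c * w c))) = (\<Sum>b\<in>I. B a b * r b) + w a"
proof -
  have "(\<Sum>b\<in>I. B a b * (\<Sum>c\<in>I. F b c * w c)) = (\<Sum>b\<in>I. \<Sum>c\<in>I. B a b * F b c * w c)"
    by (simp add: sum_distrib_left mult.assoc)
  also have "\<dots> = (\<Sum>c\<in>I. (\<Sum>b\<in>I. B a b * F b c) * w c)"
    by (subst sum.swap) (simp add: sum_distrib_right)
  also have "\<dots> = (\<Sum>c\<in>I. (if a = c then w c else 0))"
    using assms(1,3) unfolding is_inverse_on_def by (intro sum.cong) auto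
  also have "\<dots> = w a"
    using assms(2,3) by simp
  finally show ?thesis
    by (simp add: distrib_left sum.distrib)
qed

lemma abs_row_mult_le_infnorm_on:
  assumes "finite I" "a \<in> I" "\<And>b. b \<in> I \<Longrightarrow> \<bar>r b\<bar> \<le> R"
  shows "\<bar>\<Sum>b\<in>I. A a b * r b\<bar> \<le> infnorm_on I A * R"
proof -
  have R_nonneg: "0 \<le> R"
    using assms(2,3) by (meson abs_ge_zero order_trans)
  have "\<bar>\<Sum>b\<in>I. A a b * r b\<bar> \<le> (\<Sum>b\<in>I. \<bar>A a b\<bar> * \<bar>r b\<bar>)"
    by (rule order_trans[OF sum_abs]) (simp add: abs_mult)
  also have "\<dots> \<le> (\<Sum>b\<in>I. \<bar>A a b\<bar>) * R"
    unfolding sum_distrib_right using assms(3) by (intro sum_mono mult_left_mono) auto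
  also have "\<dots> \<le> infnorm_on I A * R"
    unfolding infnorm_on_def using assms(1,2) R_nonneg by (intro mult_right_mono Max_ge) auto
  finally show ?thesis .
qed

lemma finite_fidx_set: "finite (fidx_set p :: 'n::finite fidx set)"
  unfolding fidx_set_def by simp

lemma Fhat_mult_affine:
  assumes "\<Delta> \<noteq> 0"
  shows "(\<Sum>c\<in>fidx_set p. Fhat x \<Delta> y b c *
            (case c of Inl _ \<Rightarrow> 0 | Inr None \<Rightarrow> c0 | Inr (Some k) \<Rightarrow> \<Delta> * g $ k))
         = (case b of Inl j \<Rightarrow> c0 + g \<bullet> (y j - x) | Inr _ \<Rightarrow> 0)"
  (is "(\<Sum>c\<in>_. ?F c * ?w c) = _")
proof -
  have "(\<Sum>c\<in>fidx_set p. ?F c * ?w c) = (\<Sum>q\<in>UNIV. ?F (Inr q) * ?w (Inr q))"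
    unfolding fidx_set_def
    by (subst sum.union_disjoint) (auto simp: sum.reindex intro!: sum.neutral)
  also have "\<dots> = ?F (Inr None) * c0 + (\<Sum>k\<in>UNIV. ?F (Inr (Some k)) * (\<Delta> * g $ k))"
    unfolding UNIV_option_conv by (simp add: sum.reindex)
  also have "\<dots> = (case b of Inl j \<Rightarrow> c0 + g \<bullet> (y j - x) | Inr _ \<Rightarrow> 0)"
  proof (cases b)
    case (Inl j)
    with assms show ?thesis
      by (simp add: Fhat_def shat_def inner_vec_def mult.commute)
  next
    case (Inr q)
    then show ?thesis
      by (cases q) (auto simp: Fhat_def)
  qed
  finally show ?thesis .
qed

lemma mfn_sol_Inl_eq_residual:
  assumes inv: "invertible_on (fidx_set p) (Fhat x \<Delta> y)" and "\<Delta> \<noteq> 0" and "i < p"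
  shows "mfn_sol f x \<Delta> p y (Inl i)
         = (\<Sum>b\<in>fidx_set p. inv_on (fidx_set p) (Fhat x \<Delta> y) (Inl i) b *
              (case b of Inl j \<Rightarrow> f (y j) - (c0 + g \<bullet> (y j - x)) | Inr _ \<Rightarrow> 0))"
    (is "_ = (\<Sum>b\<in>?I. ?B (Inl i) b * ?res b)")
proof -
  define w :: "'a fidx \<Rightarrow> real"
    where "w c = (case c of Inl _ \<Rightarrow> 0 | Inr None \<Rightarrow> c0 | Inr (Some k) \<Rightarrow> \<Delta> * g $ k)" for c
  have "is_inverse_on ?I (Fhat x \<Delta> y) ?B"
    using inv unfolding inv_on_def invertible_on_def by (rule someI_ex)
  moreover have "Inl i \<in> ?I"
    using \<open>i < p\<close> unfolding fidx_set_def by auto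
  moreover have "(case b of Inl j \<Rightarrow> f (y j) | Inr _ \<Rightarrow> 0)
      = ?res b + (\<Sum>c\<in>?I. Fhat x \<Delta> y b c * w c)" for b
    unfolding w_def Fhat_mult_affine[OF \<open>\<Delta> \<noteq> 0\<close>] by (cases b) auto
  ultimately have "mfn_sol f x \<Delta> p y (Inl i) = (\<Sum>b\<in>?I. ?B (Inl i) b * ?res b) + w (Inl i)"
    unfolding mfn_sol_def by (simp add: inverse_on_apply_add_image finite_fidx_set)
  then show ?thesis
    by (simp add: w_def)
qed

lemma mfn_sol_Inl_bound:
  fixes f :: "real^'n \<Rightarrow> real"
  assumes deriv: "\<And>z. (f has_derivative (\<lambda>h. grad z \<bullet> h)) (at z)"
    and lip: "\<And>u v. norm (grad u - grad v) \<le> L * norm (u - v)"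
    and pts: "\<And>j. j < p \<Longrightarrow> norm (y j - x) \<le> r"
    and inv: "invertible_on (fidx_set p) (Fhat x \<Delta> y)" and "\<Delta> \<noteq> 0" and "i < p"
  shows "\<bar>mfn_sol f x \<Delta> p y (Inl i)\<bar>
           \<le> infnorm_on (fidx_set p) (inv_on (fidx_set p) (Fhat x \<Delta> y)) * (L / 2 * r\<^sup>2)"
proof -
  have L_nonneg: "0 \<le> L"
    using lip by (rule lipschitz_constant_nonneg)
  have "\<bar>case b of Inl j \<Rightarrow> f (y j) - (f x + grad x \<bullet> (y j - x)) | Inr _ \<Rightarrow> 0\<bar> \<le> L / 2 * r\<^sup>2"
    if "b \<in> fidx_set p" for b
  proof (cases b)
    case (Inl j)
    with that have "j < p"
      unfolding fidx_set_def by auto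
    have "\<bar>f (y j) - f x - grad x \<bullet> (y j - x)\<bar> \<le> L / 2 * (norm (y j - x))\<^sup>2"
      using deriv lip by (rule lipschitz_gradient_taylor_abs)
    also have "\<dots> \<le> L / 2 * r\<^sup>2"
      using pts[OF \<open>j < p\<close>] L_nonneg by (intro mult_left_mono power_mono) auto
    finally show ?thesis
      using Inl by (simp add: algebra_simps)
  qed (simp add: L_nonneg)
  then show ?thesis
    unfolding mfn_sol_Inl_eq_residual[OF inv \<open>\<Delta> \<noteq> 0\<close> \<open>i < p\<close>, of f "f x" "grad x"]
    using \<open>i < p\<close> by (intro abs_row_mult_le_infnorm_on) (auto simp: fidx_set_def)
qed

lemma outer_sum_mult_vec:
  fixes h :: "'i \<Rightarrow> real^'n"
  assumes "finite A"
  shows "(\<Sum>i\<in>A. c i *\<^sub>R (\<chi> a b. h i $ a * h i $ b)) *v v = (\<Sum>i\<in>A. (c i * (h i \<bullet> v)) *\<^sub>R h i)"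
  using assms
  by (simp add: vec_eq_iff matrix_vector_mult_def sum_component inner_vec_def sum_distrib_left
      sum_distrib_right sum.swap[of _ A])
    (auto intro!: sum.cong simp: algebra_simps)

lemma onorm_outer_sum_le:
  fixes h :: "'i \<Rightarrow> real^'n"
  assumes "finite A"
  shows "onorm (\<lambda>v. (\<Sum>i\<in>A. c i *\<^sub>R (\<chi> a b. h i $ a * h i $ b)) *v v)
           \<le> (\<Sum>i\<in>A. \<bar>c i\<bar> * (norm (h i))\<^sup>2)"
proof (rule onorm_le)
  fix v :: "real^'n"
  have "norm (\<Sum>i\<in>A. (c i * (h i \<bullet> v)) *\<^sub>R h i) \<le> (\<Sum>i\<in>A. \<bar>c i\<bar> * \<bar>h i \<bullet> v\<bar> * norm (h i))"
    by (rule order_trans[OF norm_sum]) (simp add: abs_mult)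
  also have "\<dots> \<le> (\<Sum>i\<in>A. \<bar>c i\<bar> * (norm (h i) * norm v) * norm (h i))"
    by (intro sum_mono mult_right_mono mult_left_mono Cauchy_Schwarz_ineq2) auto
  also have "\<dots> = (\<Sum>i\<in>A. \<bar>c i\<bar> * (norm (h i))\<^sup>2) * norm v"
    by (simp add: sum_distrib_left sum_distrib_right power2_eq_square mult_ac)
  finally show "norm ((\<Sum>i\<in>A. c i *\<^sub>R (\<chi> a b. h i $ a * h i $ b)) *v v)
      \<le> (\<Sum>i\<in>A. \<bar>c i\<bar> * (norm (h i))\<^sup>2) * norm v"
    unfolding outer_sum_mult_vec[OF assms] .
qed

theorem lemma5p14:
  fixes f :: "real^'n \<Rightarrow> real" and grad :: "real^'n \<Rightarrow> real^'n"
    and x :: "real^'n" and y :: "nat \<Rightarrow> real^'n"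
    and \<Delta> \<beta> L :: real and p :: nat
  assumes p_lo: "CARD('n) + 2 \<le> p"
    and p_hi: "p \<le> (CARD('n) + 1) * (CARD('n) + 2) div 2 - 1"
    and bdd: "\<exists>b. \<forall>z. b \<le> f z"
    and deriv: "\<And>z. (f has_derivative (\<lambda>h. grad z \<bullet> h)) (at z)"
    and grad_cont: "continuous_on UNIV grad"
    and lip: "\<And>u v. norm (grad u - grad v) \<le> L * norm (u - v)"
    and Delta_pos: "\<Delta> > 0" and beta_pos: "\<beta> > 0"
    and pts: "\<And>i. i < p \<Longrightarrow> norm (y i - x) \<le> \<beta> * \<Delta>"
    and inv: "invertible_on (fidx_set p) (Fhat x \<Delta> y)"
  shows "onorm (\<lambda>v. mfn_H f x \<Delta> p y *v v)
           \<le> L / 2 * real p * \<beta>^4 * infnorm_on (fidx_set p) (inv_on (fidx_set p) (Fhat x \<Delta> y))"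
proof -
  define N where "N = infnorm_on (fidx_set p) (inv_on (fidx_set p) (Fhat x \<Delta> y))"
  have term_bound: "\<bar>mfn_sol f x \<Delta> p y (Inl i) / \<Delta>^4\<bar> * (norm (y i - x))\<^sup>2
      \<le> L / 2 * \<beta>^4 * N" if "i < p" for i
  proof -
    have "\<bar>mfn_sol f x \<Delta> p y (Inl i)\<bar> \<le> N * (L / 2 * (\<beta> * \<Delta>)\<^sup>2)"
      unfolding N_def using Delta_pos that by (intro mfn_sol_Inl_bound[OF deriv lip pts inv]) auto
    moreover have "(norm (y i - x))\<^sup>2 \<le> (\<beta> * \<Delta>)\<^sup>2"
      using pts[OF that] by (intro power_mono) auto
    ultimately have "\<bar>mfn_sol f x \<Delta> p y (Inl i)\<bar> * (norm (y i - x))\<^sup>2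
        \<le> N * (L / 2 * (\<beta> * \<Delta>)\<^sup>2) * (\<beta> * \<Delta>)\<^sup>2"
      by (meson abs_ge_zero mult_mono order_trans zero_le_power2)
    then show ?thesis
      using Delta_pos by (simp add: field_simps power_mult_distrib eval_nat_numeral)
  qed
  have "onorm (\<lambda>v. mfn_H f x \<Delta> p y *v v)
      \<le> (\<Sum>i<p. \<bar>mfn_sol f x \<Delta> p y (Inl i) / \<Delta>^4\<bar> * (norm (y i - x))\<^sup>2)"
    unfolding mfn_H_def by (rule onorm_outer_sum_le) simp
  also have "\<dots> \<le> (\<Sum>i<p. L / 2 * \<beta>^4 * N)"
    using term_bound by (intro sum_mono) auto
  finally show ?thesis
    unfolding N_def by (simp add: mult_ac)
qed

end
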